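(* Let $W$ be a discrete memoryless channel with finite input alphabet $\mathcal{X}$ and finite output alphabet $\mathcal{Y}$, and let $\vartheta(\rho)$ be defined as in the context. Let $\{\bm{x}_1,\ldots,\bm{x}_M\}\subseteq\mathcal{X}^n$ be any code of block-length $n$ with $M$ codewords, and let $\bm{\Psi}_m=\bm{\psi}_{x_{m,1}}\otimes\cdots\otimes\bm{\psi}_{x_{m,n}}$ be the state vector of codeword $\bm{x}_m=(x_{m,1},\ldots,x_{m,n})$. Then for every $\rho\geq 1$, $$\max_{m}\sum_{m'\neq m}\langle\bm{\Psi}_m,\bm{\Psi}_{m'}\rangle \;\geq\; \frac{\left(M e^{-n\vartheta(\rho)}-1\right)^{\rho}}{(M-1)^{\rho-1}}.$$
   Context: $W(y|x)$, $x\in\mathcal{X}$, $y\in\mathcal{Y}$, are the transition probabilities of the channel; the channel is memoryless, so $W^{(n)}(\bm{y}|\bm{x})=\prod_{i=1}^n W(y_i|x_i)$. For each input symbol $x$, the state vector $\bm{\psi}_x\in\mathbb{R}^{|\mathcal{Y}|}$ has components $\bm{\psi}_x(y)=\sqrt{W(y|x)}$ (nonnegative square roots), so it is a unit vector and $\langle\bm{\psi}_x,\bm{\psi}_{x'}\rangle=\sum_y\sqrt{W(y|x)W(y|x')}\ge 0$; $\otimes$ is the Kronecker product, and $\langle\bm{\Psi}_m,\bm{\Psi}_{m'}\rangle=\sum_{\bm{y}\in\mathcal{Y}^n}\sqrt{W^{(n)}(\bm{y}|\bm{x}_m)W^{(n)}(\bm{y}|\bm{x}_{m'})}$. For $\rho\ge1$,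 an orthonormal representation of degree $\rho$ is a family $\{\tilde{\bm{\psi}}_x\}_{x\in\mathcal{X}}$ of unit-norm vectors in some (complex) Hilbert space such that $|\langle\tilde{\bm{\psi}}_x,\tilde{\bm{\psi}}_{x'}\rangle|\le(\langle\bm{\psi}_x,\bm{\psi}_{x'}\rangle)^{1/\rho}$ for all $x,x'$; $\Gamma(\rho)$ denotes the set of all such representations. The value of a representation is $V(\{\tilde{\bm{\psi}}_x\})=\min_{\bm{f}}\max_x\log\frac{1}{|\langle\tilde{\bm{\psi}}_x,\bm{f}\rangle|^2}$, the minimum over unit-norm vectors $\bm{f}$ in the same space, and $\vartheta(\rho)=\min_{\{\tilde{\bm{\psi}}_x\}\in\Gamma(\rho)}V(\{\tilde{\bm{\psi}}_x\})$. Logarithms are natural. *)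

theory Defs
  imports "HOL-Analysis.Analysis"
begin

text \<open>Discrete memoryless channel: W x y = W(y|x).\<close>
definition dmc :: "('x::finite \<Rightarrow> 'y::finite \<Rightarrow> real) \<Rightarrow> bool" where
  "dmc W \<longleftrightarrow> (\<forall>x y. 0 \<le> W x y) \<and> (\<forall>x. (\<Sum>y\<in>UNIV. W x y) = 1)"

text \<open>Inner product of the state vectors psi_x, psi_x' (components sqrt W(y|x)).\<close>
definition psi_inner :: "('x \<Rightarrow> 'y::finite \<Rightarrow> real) \<Rightarrow> 'x \<Rightarrow> 'x \<Rightarrow> real" where
  "psi_inner W x x' = (\<Sum>y\<in>UNIV. sqrt (W x y) * sqrt (W x' y))"

definition cinner :: "complex^'d::finite \<Rightarrow> complex^'d \<Rightarrow> complex" where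
  "cinner u v = (\<Sum>i\<in>UNIV. cnj (u $ i) * v $ i)"

definition Gamma :: "('x::finite \<Rightarrow> 'y::finite \<Rightarrow> real) \<Rightarrow> real \<Rightarrow> ('x \<Rightarrow> complex^'d::finite) set" where
  "Gamma W \<rho> = {\<phi>. (\<forall>x. norm (\<phi> x) = 1) \<and>
      (\<forall>x x'. cmod (cinner (\<phi> x) (\<phi> x')) \<le> (psi_inner W x x') powr (1 / \<rho>))}"

definition logterm :: "complex^'d::finite \<Rightarrow> complex^'d \<Rightarrow> ereal" where
  "logterm u f = (if cinner u f = 0 then \<infinity> else ereal (ln (1 / (cmod (cinner u f))\<^sup>2)))"

definition rep_value :: "('x::finite \<Rightarrow> complex^'d::finite) \<Rightarrow> ereal" where
  "rep_value \<phi> = (INF f\<in>{f. norm f = 1}. SUP x\<in>UNIV. logterm (\<phi> x) f)"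

definition theta :: "('x::finite \<Rightarrow> 'y::finite \<Rightarrow> real) \<Rightarrow> real \<Rightarrow> 'd::finite itself \<Rightarrow> ereal" where
  "theta W \<rho> _ = (INF \<phi>\<in>(Gamma W \<rho> :: ('x \<Rightarrow> complex^'d) set). rep_value \<phi>)"

definition exp_neg :: "ereal \<Rightarrow> real" where
  "exp_neg t = (if t = \<infinity> then 0 else exp (- real_of_ereal t))"

definition codeword_inner :: "('x \<Rightarrow> 'y::finite \<Rightarrow> real) \<Rightarrow> nat \<Rightarrow> (nat \<Rightarrow> 'x) \<Rightarrow> (nat \<Rightarrow> 'x) \<Rightarrow> real" where
  "codeword_inner W n u v = (\<Sum>y\<in>(PiE {..<n} (\<lambda>_. UNIV)).
      sqrt ((\<Prod>i<n. W (u i) (y i)) * (\<Prod>i<n. W (v i) (y i))))"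

end

theory Submission
  imports Defs
begin

text \<open>Take a representation \<open>\<phi>\<close> of degree \<open>\<rho>\<close> and a unit vector \<open>f\<close> with
  \<open>|\<langle>\<phi> x, f\<rangle>|^2 \<ge> exp (-v)\<close> for every input \<open>x\<close>. The tensor products \<open>\<Phi> m\<close> of the
  vectors \<open>\<phi> x\<close> along codeword \<open>m\<close> satisfy \<open>|\<langle>\<Phi> m, \<Phi> m'\<rangle>| \<le> \<langle>\<Psi> m, \<Psi> m'\<rangle> powr (1/\<rho>)\<close>,
  while their coefficients against the unit vector \<open>f \<otimes> \<dots> \<otimes> f\<close> have squared modulus at
  least \<open>exp (-n v)\<close>. A Schur-test bound for the coefficients of a unit vector with respect to a
  family whose Gram matrix is dominated entrywise gives
  \<open>M exp (-n v) \<le> max\<^sub>m \<Sum>\<^sub>m\<^sub>' \<langle>\<Psi> m, \<Psi> m'\<rangle> powr (1/\<rho>)\<close>. The diagonal terms are 1, and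
  the power-mean inequality bounds the rest of row \<open>m\<close> by
  \<open>((M - 1) powr (\<rho> - 1) * \<Sum>\<^sub>m\<^sub>'\<^sub>\<noteq>\<^sub>m \<langle>\<Psi> m, \<Psi> m'\<rangle>) powr (1/\<rho>)\<close>.
  Letting \<open>v\<close> decrease to \<open>\<vartheta>(\<rho>)\<close> gives the theorem.\<close>

lemma powr_ge_tangent:
  fixes p a t :: real
  assumes "p \<ge> 1" "a > 0" "t \<ge> 0"
  shows "a powr p + p * a powr (p - 1) * (t - a) \<le> t powr p"
proof (cases "t = 0")
  case True
  have "a powr p - p * a powr (p - 1) * a = (1 - p) * a powr p"
    using \<open>a > 0\<close> by (simp add: powr_diff algebra_simps)
  also have "\<dots> \<le> 0" using assms by (simp add: mult_nonpos_nonneg)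
  finally show ?thesis using True by (simp add: algebra_simps)
next
  case False
  have "p * a powr (p - 1) * (t - a) \<le> t powr p - a powr p"
    using assms False
    by (intro convex_on_imp_above_tangent[where A = "{0<..}"] powr_convex)
       (auto intro!: derivative_eq_intros simp: interior_open)
  then show ?thesis by simp
qed

lemma powr_sum_le_card_powr_mult_sum_powr:
  fixes t :: "'a \<Rightarrow> real"
  assumes "finite J" "J \<noteq> {}" "p \<ge> 1" "\<And>j. j \<in> J \<Longrightarrow> 0 \<le> t j"
  shows "(\<Sum>j\<in>J. t j) powr p \<le> real (card J) powr (p - 1) * (\<Sum>j\<in>J. t j powr p)"
proof -
  define k where "k = real (card J)"
  define a where "a = (\<Sum>j\<in>J. t j) / k"
  have k: "k > 0" using assms by (simp add: k_def card_gt_0_iff)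
  have sum_eq: "(\<Sum>j\<in>J. t j) = k * a" using k by (simp add: a_def)
  show ?thesis
  proof (cases "a = 0")
    case True
    then show ?thesis using assms by (simp add: sum_eq sum_nonneg)
  next
    case False
    then have a: "a > 0" using k assms by (simp add: a_def sum_nonneg order_less_le)
    have "k * a powr p = (\<Sum>j\<in>J. a powr p + p * a powr (p - 1) * (t j - a))"
      by (simp add: sum.distrib sum_subtractf sum_distrib_left[symmetric] sum_eq k_def)
    also have "\<dots> \<le> (\<Sum>j\<in>J. t j powr p)"
      using assms a by (intro sum_mono powr_ge_tangent) auto
    finally have "k * a powr p \<le> (\<Sum>j\<in>J. t j powr p)" .
    moreover have "(\<Sum>j\<in>J. t j) powr p = k powr (p - 1) * (k * a powr p)"
      using k a by (simp add: sum_eq powr_mult powr_diff)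
    ultimately show ?thesis
      by (simp add: k_def[symmetric] mult_left_mono)
  qed
qed

lemma sum_powr_inverse_le:
  fixes t :: "'a \<Rightarrow> real"
  assumes "finite J" "J \<noteq> {}" "p \<ge> 1" "\<And>j. j \<in> J \<Longrightarrow> 0 \<le> t j"
  shows "(\<Sum>j\<in>J. t j powr (1 / p)) \<le> (real (card J) powr (p - 1) * (\<Sum>j\<in>J. t j)) powr (1 / p)"
proof -
  have "(\<Sum>j\<in>J. (t j powr (1 / p)) powr p) = (\<Sum>j\<in>J. t j)"
    using assms by (intro sum.cong refl) (simp add: powr_powr)
  then have "(\<Sum>j\<in>J. t j powr (1 / p)) powr p \<le> real (card J) powr (p - 1) * (\<Sum>j\<in>J. t j)"
    using powr_sum_le_card_powr_mult_sum_powr[of J p "\<lambda>j. t j powr (1 / p)"] assms by simp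
  then have "((\<Sum>j\<in>J. t j powr (1 / p)) powr p) powr (1 / p)
      \<le> (real (card J) powr (p - 1) * (\<Sum>j\<in>J. t j)) powr (1 / p)"
    using assms by (intro powr_mono2) auto
  then show ?thesis
    using assms by (simp add: powr_powr sum_nonneg)
qed

definition fun_inner :: "'i set \<Rightarrow> ('i \<Rightarrow> complex) \<Rightarrow> ('i \<Rightarrow> complex) \<Rightarrow> complex" where
  "fun_inner I u v = (\<Sum>i\<in>I. cnj (u i) * v i)"

lemma fun_inner_self: "fun_inner I u u = of_real (\<Sum>i\<in>I. (cmod (u i))\<^sup>2)"
  unfolding fun_inner_def of_real_sum by (intro sum.cong refl) (simp add: complex_norm_square[unfolded of_real_power] mult.commute)

lemma fun_inner_commute: "fun_inner I v u = cnj (fun_inner I u v)"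
  unfolding fun_inner_def by (simp add: mult.commute)

lemma fun_inner_Cauchy_Schwarz:
  "(cmod (fun_inner I u v))\<^sup>2 \<le> (\<Sum>i\<in>I. (cmod (u i))\<^sup>2) * (\<Sum>i\<in>I. (cmod (v i))\<^sup>2)"
proof -
  have "cmod (fun_inner I u v) \<le> (\<Sum>i\<in>I. cmod (u i) * cmod (v i))"
    unfolding fun_inner_def by (rule order_trans[OF norm_sum]) (simp add: norm_mult)
  also have "\<dots> \<le> L2_set (\<lambda>i. cmod (u i)) I * L2_set (\<lambda>i. cmod (v i)) I"
    using L2_set_mult_ineq[of "\<lambda>i. cmod (u i)" "\<lambda>i. cmod (v i)" I] by simp
  finally have "(cmod (fun_inner I u v))\<^sup>2 \<le> (L2_set (\<lambda>i. cmod (u i)) I * L2_set (\<lambda>i. cmod (v i)) I)\<^sup>2"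
    by (simp add: power_mono)
  then show ?thesis
    by (simp add: power_mult_distrib L2_set_def sum_nonneg)
qed

lemma fun_inner_sum_left:
  "fun_inner I (\<lambda>i. \<Sum>m\<in>A. a m * u m i) v = (\<Sum>m\<in>A. cnj (a m) * fun_inner I (u m) v)"
  unfolding fun_inner_def
  by (simp add: sum_distrib_left sum_distrib_right sum.swap[of _ I] mult_ac)

lemma fun_inner_sum_right:
  "fun_inner I u (\<lambda>i. \<Sum>m\<in>A. b m * v m i) = (\<Sum>m\<in>A. b m * fun_inner I u (v m))"
  unfolding fun_inner_def
  by (simp add: sum_distrib_left sum_distrib_right sum.swap[of _ I] mult_ac)

lemma quadratic_form_le_weighted_row_sums:
  fixes x :: "'m \<Rightarrow> real" and G g :: "'m \<Rightarrow> 'm \<Rightarrow> real"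
  assumes "\<And>m m'. m \<in> A \<Longrightarrow> m' \<in> A \<Longrightarrow> 0 \<le> G m m'"
    and "\<And>m m'. m \<in> A \<Longrightarrow> m' \<in> A \<Longrightarrow> G m m' = G m' m"
    and "\<And>m m'. m \<in> A \<Longrightarrow> m' \<in> A \<Longrightarrow> G m m' \<le> g m m'"
  shows "(\<Sum>m\<in>A. \<Sum>m'\<in>A. x m * x m' * G m m') \<le> (\<Sum>m\<in>A. (x m)\<^sup>2 * (\<Sum>m'\<in>A. g m m'))"
proof -
  have "(\<Sum>m\<in>A. \<Sum>m'\<in>A. x m * x m' * G m m')
      \<le> (\<Sum>m\<in>A. \<Sum>m'\<in>A. ((x m)\<^sup>2 * G m m' + (x m')\<^sup>2 * G m' m) / 2)"
  proof (intro sum_mono)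
    fix m m' assume "m \<in> A" "m' \<in> A"
    have "2 * (x m * x m') * G m m' \<le> ((x m)\<^sup>2 + (x m')\<^sup>2) * G m m'"
      using sum_squares_bound[of "x m" "x m'"] assms(1)[OF \<open>m \<in> A\<close> \<open>m' \<in> A\<close>]
      by (intro mult_right_mono) (auto simp: mult.assoc)
    then show "x m * x m' * G m m' \<le> ((x m)\<^sup>2 * G m m' + (x m')\<^sup>2 * G m' m) / 2"
      using assms(2)[OF \<open>m \<in> A\<close> \<open>m' \<in> A\<close>] by (simp add: algebra_simps)
  qed
  also have "\<dots> = (\<Sum>m\<in>A. \<Sum>m'\<in>A. (x m)\<^sup>2 * G m m')"
    by (simp add: sum.distrib sum_divide_distrib[symmetric]) (rule sum.swap)
  also have "\<dots> \<le> (\<Sum>m\<in>A. (x m)\<^sup>2 * (\<Sum>m'\<in>A. g m m'))"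
    unfolding sum_distrib_left using assms(3) by (intro sum_mono mult_left_mono) auto
  finally show ?thesis .
qed

lemma sum_sq_lincomb_le_weighted_row_sums:
  fixes \<Phi> :: "'m \<Rightarrow> 'i \<Rightarrow> complex" and g :: "'m \<Rightarrow> 'm \<Rightarrow> real"
  assumes "\<And>m m'. m \<in> A \<Longrightarrow> m' \<in> A \<Longrightarrow> cmod (fun_inner I (\<Phi> m) (\<Phi> m')) \<le> g m m'"
  shows "(\<Sum>i\<in>I. (cmod (\<Sum>m\<in>A. a m * \<Phi> m i))\<^sup>2) \<le> (\<Sum>m\<in>A. (cmod (a m))\<^sup>2 * (\<Sum>m'\<in>A. g m m'))"
proof -
  define V where "V i = (\<Sum>m\<in>A. a m * \<Phi> m i)" for i
  have "(\<Sum>i\<in>I. (cmod (V i))\<^sup>2) = cmod (fun_inner I V V)"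
    unfolding fun_inner_self norm_of_real by (simp add: sum_nonneg)
  also have "fun_inner I V V = (\<Sum>m\<in>A. \<Sum>m'\<in>A. cnj (a m) * a m' * fun_inner I (\<Phi> m) (\<Phi> m'))"
    unfolding V_def fun_inner_sum_left fun_inner_sum_right by (simp add: sum_distrib_left mult_ac)
  also have "cmod \<dots> \<le> (\<Sum>m\<in>A. cmod (\<Sum>m'\<in>A. cnj (a m) * a m' * fun_inner I (\<Phi> m) (\<Phi> m')))"
    by (rule norm_sum)
  also have "\<dots> \<le> (\<Sum>m\<in>A. \<Sum>m'\<in>A. cmod (a m) * cmod (a m') * cmod (fun_inner I (\<Phi> m) (\<Phi> m')))"
    by (rule sum_mono, rule order_trans[OF norm_sum]) (simp add: norm_mult)
  also have "\<dots> \<le> (\<Sum>m\<in>A. (cmod (a m))\<^sup>2 * (\<Sum>m'\<in>A. g m m'))"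
  proof (rule quadratic_form_le_weighted_row_sums)
    fix m m' assume "m \<in> A" "m' \<in> A"
    then show "cmod (fun_inner I (\<Phi> m) (\<Phi> m')) \<le> g m m'" by (rule assms)
    show "cmod (fun_inner I (\<Phi> m) (\<Phi> m')) = cmod (fun_inner I (\<Phi> m') (\<Phi> m))"
      by (simp add: fun_inner_commute[of I "\<Phi> m"])
  qed simp
  finally show ?thesis unfolding V_def .
qed

text \<open>With \<open>V = \<Sum>\<^sub>m \<langle>\<Phi> m, F\<rangle> \<Phi> m\<close>, the square sum \<open>s\<close> of the coefficients equals
  \<open>\<langle>V, F\<rangle>\<close>, so Cauchy-Schwarz and the previous lemma give \<open>s^2 \<le> s * R * \<parallel>F\<parallel>^2\<close>.\<close>
lemma sum_sq_fun_inner_le_max_row_sum: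
  fixes \<Phi> :: "'m \<Rightarrow> 'i \<Rightarrow> complex" and g :: "'m \<Rightarrow> 'm \<Rightarrow> real"
  assumes A: "finite A" "A \<noteq> {}"
    and g: "\<And>m m'. m \<in> A \<Longrightarrow> m' \<in> A \<Longrightarrow> cmod (fun_inner I (\<Phi> m) (\<Phi> m')) \<le> g m m'"
  shows "(\<Sum>m\<in>A. (cmod (fun_inner I (\<Phi> m) F))\<^sup>2)
       \<le> Max ((\<lambda>m. \<Sum>m'\<in>A. g m m') ` A) * (\<Sum>i\<in>I. (cmod (F i))\<^sup>2)"
proof -
  define a where "a m = fun_inner I (\<Phi> m) F" for m
  define s where "s = (\<Sum>m\<in>A. (cmod (a m))\<^sup>2)"
  define V where "V i = (\<Sum>m\<in>A. a m * \<Phi> m i)" for i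
  define R where "R = Max ((\<lambda>m. \<Sum>m'\<in>A. g m m') ` A)"
  define nF where "nF = (\<Sum>i\<in>I. (cmod (F i))\<^sup>2)"
  have R_ge: "(\<Sum>m'\<in>A. g m m') \<le> R" if "m \<in> A" for m
    using A that by (simp add: R_def)
  have R_nonneg: "0 \<le> R"
    using A R_ge g by (metis all_not_in_conv norm_ge_zero order_trans sum_nonneg)
  have s_eq: "of_real s = fun_inner I V F"
    unfolding V_def fun_inner_sum_left
    by (simp add: s_def a_def of_real_sum complex_norm_square[unfolded of_real_power] mult.commute)
  have "(\<Sum>i\<in>I. (cmod (V i))\<^sup>2) \<le> (\<Sum>m\<in>A. (cmod (a m))\<^sup>2 * (\<Sum>m'\<in>A. g m m'))"
    unfolding V_def using g by (rule sum_sq_lincomb_le_weighted_row_sums)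
  also have "\<dots> \<le> s * R"
    unfolding s_def sum_distrib_right by (intro sum_mono mult_left_mono R_ge) auto
  finally have V_le: "(\<Sum>i\<in>I. (cmod (V i))\<^sup>2) \<le> s * R" .
  have "s\<^sup>2 \<le> (\<Sum>i\<in>I. (cmod (V i))\<^sup>2) * nF"
    using fun_inner_Cauchy_Schwarz[of I V F] by (simp add: s_eq[symmetric] nF_def)
  also have "\<dots> \<le> s * R * nF"
    using V_le by (intro mult_right_mono) (auto simp: nF_def sum_nonneg)
  finally have "s * s \<le> s * (R * nF)" by (simp add: power2_eq_square mult_ac)
  moreover have "0 \<le> R * nF" using R_nonneg by (simp add: nF_def sum_nonneg)
  ultimately have "s \<le> R * nF"
    by (cases "s = 0") (auto simp: s_def sum_nonneg order_less_le)
  then show ?thesis by (simp add: s_def a_def R_def nF_def)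
qed

lemma prod_sum_PiE_lessThan:
  fixes h :: "nat \<Rightarrow> 'd::finite \<Rightarrow> 'c::comm_semiring_1"
  shows "(\<Sum>i\<in>PiE {..<n} (\<lambda>_. UNIV). \<Prod>k<n. h k (i k)) = (\<Prod>k<n. \<Sum>y\<in>UNIV. h k y)"
  by (rule prod_sum_PiE[symmetric]) auto

lemma real_sqrt_prod: "sqrt (prod f A) = (\<Prod>x\<in>A. sqrt (f x))"
  by (induction A rule: infinite_finite_induct) (auto simp: real_sqrt_mult)

lemma codeword_inner_eq_prod_psi_inner:
  "codeword_inner W n u v = (\<Prod>k<n. psi_inner W (u k) (v k))"
  unfolding codeword_inner_def psi_inner_def
  using prod_sum_PiE_lessThan[of "\<lambda>k y. sqrt (W (u k) y) * sqrt (W (v k) y)" n]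
  by (simp add: real_sqrt_mult real_sqrt_prod prod.distrib)

lemma psi_inner_nonneg: "dmc W \<Longrightarrow> 0 \<le> psi_inner W x x'"
  unfolding psi_inner_def dmc_def by (intro sum_nonneg) simp

lemma codeword_inner_nonneg: "dmc W \<Longrightarrow> 0 \<le> codeword_inner W n u v"
  by (simp add: codeword_inner_eq_prod_psi_inner psi_inner_nonneg prod_nonneg)

lemma codeword_inner_self: "dmc W \<Longrightarrow> codeword_inner W n u u = 1"
  unfolding codeword_inner_eq_prod_psi_inner psi_inner_def dmc_def by simp

lemma cinner_eq_fun_inner: "cinner u v = fun_inner UNIV (($) u) (($) v)"
  unfolding cinner_def fun_inner_def ..

lemma cinner_self: "cinner u u = of_real ((norm u)\<^sup>2)"
  unfolding cinner_eq_fun_inner fun_inner_self norm_vec_def L2_set_def by (simp add: sum_nonneg)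

text \<open>The coordinates of \<open>u 0 \<otimes> \<dots> \<otimes> u (n - 1)\<close>, indexed by \<open>PiE {..<n} (\<lambda>_. UNIV)\<close>.\<close>
definition tensor :: "nat \<Rightarrow> (nat \<Rightarrow> complex^'d::finite) \<Rightarrow> (nat \<Rightarrow> 'd) \<Rightarrow> complex" where
  "tensor n u i = (\<Prod>k<n. u k $ i k)"

lemma fun_inner_tensor:
  "fun_inner (PiE {..<n} (\<lambda>_. UNIV)) (tensor n u) (tensor n v) = (\<Prod>k<n. cinner (u k) (v k))"
  unfolding fun_inner_def tensor_def cinner_def
  using prod_sum_PiE_lessThan[of "\<lambda>k y. cnj (u k $ y) * v k $ y" n] by (simp add: prod.distrib)

lemma sum_sq_tensor:
  "(\<Sum>i\<in>PiE {..<n} (\<lambda>_. UNIV). (cmod (tensor n u i))\<^sup>2) = (\<Prod>k<n. (norm (u k))\<^sup>2)"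
  using fun_inner_tensor[of n u u]
  by (simp only: fun_inner_self cinner_self of_real_prod[symmetric] of_real_eq_iff)

lemma cmod_fun_inner_tensor_rep_le:
  assumes "dmc W" "\<phi> \<in> Gamma W \<rho>"
  shows "cmod (fun_inner (PiE {..<n} (\<lambda>_. UNIV)) (tensor n (\<phi> \<circ> u)) (tensor n (\<phi> \<circ> v)))
       \<le> codeword_inner W n u v powr (1 / \<rho>)"
proof -
  have "cmod (fun_inner (PiE {..<n} (\<lambda>_. UNIV)) (tensor n (\<phi> \<circ> u)) (tensor n (\<phi> \<circ> v)))
      = (\<Prod>k<n. cmod (cinner (\<phi> (u k)) (\<phi> (v k))))"
    by (simp add: fun_inner_tensor prod_norm)
  also have "\<dots> \<le> (\<Prod>k<n. psi_inner W (u k) (v k) powr (1 / \<rho>))"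
    using assms(2) by (intro prod_mono) (simp add: Gamma_def)
  also have "\<dots> = codeword_inner W n u v powr (1 / \<rho>)"
    using assms(1) by (simp add: codeword_inner_eq_prod_psi_inner prod_powr_distrib psi_inner_nonneg)
  finally show ?thesis .
qed

lemma exp_le_cmod_fun_inner_tensor_sq:
  assumes "\<And>x. exp (- v) \<le> (cmod (cinner (\<phi> x) f))\<^sup>2"
  shows "exp (- real n * v)
       \<le> (cmod (fun_inner (PiE {..<n} (\<lambda>_. UNIV)) (tensor n (\<phi> \<circ> u)) (tensor n (\<lambda>_. f))))\<^sup>2"
proof -
  have "exp (- real n * v) = (\<Prod>k<n. exp (- v))"
    by (simp add: exp_of_nat_mult[symmetric])
  also have "\<dots> \<le> (\<Prod>k<n. (cmod (cinner (\<phi> (u k)) f))\<^sup>2)"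
    using assms by (intro prod_mono) auto
  also have "\<dots> = (cmod (fun_inner (PiE {..<n} (\<lambda>_. UNIV)) (tensor n (\<phi> \<circ> u)) (tensor n (\<lambda>_. f))))\<^sup>2"
    by (simp add: fun_inner_tensor prod_norm[symmetric] prod_power_distrib)
  finally show ?thesis .
qed

lemma sum_codeword_inner_powr_le:
  assumes "dmc W" "\<rho> \<ge> 1" "m < M"
  shows "(\<Sum>m'<M. codeword_inner W n (c m) (c m') powr (1 / \<rho>))
       \<le> 1 + ((real M - 1) powr (\<rho> - 1)
              * (\<Sum>m'\<in>{..<M} - {m}. codeword_inner W n (c m) (c m'))) powr (1 / \<rho>)"
proof (cases "M = 1")
  case True
  then show ?thesis using assms by (simp add: codeword_inner_self)
next
  case False
  have card: "real (card ({..<M} - {m})) = real M - 1"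
    using assms by (simp add: card_Diff_singleton of_nat_diff)
  have nonempty: "{..<M} - {m} \<noteq> {}"
  proof
    assume "{..<M} - {m} = {}"
    then have "real M - 1 = 0" using card by (metis card.empty of_nat_0)
    then show False using False by simp
  qed
  have "(\<Sum>m'<M. codeword_inner W n (c m) (c m') powr (1 / \<rho>))
      = 1 + (\<Sum>m'\<in>{..<M} - {m}. codeword_inner W n (c m) (c m') powr (1 / \<rho>))"
    using assms by (simp add: sum.remove[of "{..<M}" m] codeword_inner_self)
  also have "\<dots> \<le> 1 + ((real M - 1) powr (\<rho> - 1)
              * (\<Sum>m'\<in>{..<M} - {m}. codeword_inner W n (c m) (c m'))) powr (1 / \<rho>)"
    using sum_powr_inverse_le[of "{..<M} - {m}" \<rho> "\<lambda>m'. codeword_inner W n (c m) (c m')"]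
      assms nonempty codeword_inner_nonneg[OF assms(1)]
    by (simp add: card)
  finally show ?thesis .
qed

lemma Max_row_sum_codeword_inner_powr_le:
  assumes "dmc W" "M \<ge> 1" "\<rho> \<ge> 1"
  shows "Max ((\<lambda>m. \<Sum>m'<M. codeword_inner W n (c m) (c m') powr (1 / \<rho>)) ` {..<M})
       \<le> 1 + ((real M - 1) powr (\<rho> - 1)
          * Max ((\<lambda>m. \<Sum>m'\<in>{..<M} - {m}. codeword_inner W n (c m) (c m')) ` {..<M})) powr (1 / \<rho>)"
    (is "_ \<le> 1 + ((real M - 1) powr (\<rho> - 1) * ?L) powr (1 / \<rho>)")
proof (rule Max.boundedI)
  show "finite ((\<lambda>m. \<Sum>m'<M. codeword_inner W n (c m) (c m') powr (1 / \<rho>)) ` {..<M})" by simp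
  show "(\<lambda>m. \<Sum>m'<M. codeword_inner W n (c m) (c m') powr (1 / \<rho>)) ` {..<M} \<noteq> {}"
    using assms(2) by (auto simp: lessThan_empty_iff bot_nat_def)
next
  fix r assume "r \<in> (\<lambda>m. \<Sum>m'<M. codeword_inner W n (c m) (c m') powr (1 / \<rho>)) ` {..<M}"
  then obtain m where m: "m < M" "r = (\<Sum>m'<M. codeword_inner W n (c m) (c m') powr (1 / \<rho>))"
    by auto
  have "(\<Sum>m'\<in>{..<M} - {m}. codeword_inner W n (c m) (c m')) \<le> ?L"
    using m by (intro Max_ge) auto
  then have "((real M - 1) powr (\<rho> - 1) * (\<Sum>m'\<in>{..<M} - {m}. codeword_inner W n (c m) (c m')))
      powr (1 / \<rho>) \<le> ((real M - 1) powr (\<rho> - 1) * ?L) powr (1 / \<rho>)"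
    using assms(1,3) by (intro powr_mono2 mult_left_mono mult_nonneg_nonneg sum_nonneg)
      (auto simp: codeword_inner_nonneg)
  then show "r \<le> 1 + ((real M - 1) powr (\<rho> - 1) * ?L) powr (1 / \<rho>)"
    using sum_codeword_inner_powr_le[OF assms(1,3) m(1), of n c] m(2) by linarith
qed

lemma codeword_bound_of_rep:
  fixes W :: "'x::finite \<Rightarrow> 'y::finite \<Rightarrow> real" and c :: "nat \<Rightarrow> nat \<Rightarrow> 'x"
    and \<phi> :: "'x \<Rightarrow> complex^'d::finite"
  assumes "dmc W" "M \<ge> 1" "\<rho> \<ge> 1" "\<phi> \<in> Gamma W \<rho>" "norm f = 1"
    and "\<And>x. exp (- v) \<le> (cmod (cinner (\<phi> x) f))\<^sup>2"
  shows "real M * exp (- real n * v) - 1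
       \<le> ((real M - 1) powr (\<rho> - 1)
          * Max ((\<lambda>m. \<Sum>m'\<in>{..<M} - {m}. codeword_inner W n (c m) (c m')) ` {..<M})) powr (1 / \<rho>)"
proof -
  let ?I = "PiE {..<n} (\<lambda>_. UNIV :: 'd set)"
  let ?L = "Max ((\<lambda>m. \<Sum>m'\<in>{..<M} - {m}. codeword_inner W n (c m) (c m')) ` {..<M})"
  define \<Phi> where "\<Phi> m = tensor n (\<phi> \<circ> c m)" for m
  define F where "F = tensor n (\<lambda>_::nat. f)"
  have "real M * exp (- real n * v) = (\<Sum>m<M. exp (- real n * v))"
    by simp
  also have "\<dots> \<le> (\<Sum>m<M. (cmod (fun_inner ?I (\<Phi> m) F))\<^sup>2)"
    unfolding \<Phi>_def F_def by (intro sum_mono exp_le_cmod_fun_inner_tensor_sq assms(6))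
  also have "\<dots> \<le> Max ((\<lambda>m. \<Sum>m'<M. codeword_inner W n (c m) (c m') powr (1 / \<rho>)) ` {..<M})
                  * (\<Sum>i\<in>?I. (cmod (F i))\<^sup>2)"
    using assms(2) cmod_fun_inner_tensor_rep_le[OF assms(1,4)]
    by (intro sum_sq_fun_inner_le_max_row_sum) (auto simp: \<Phi>_def lessThan_empty_iff bot_nat_def)
  also have "(\<Sum>i\<in>?I. (cmod (F i))\<^sup>2) = 1"
    using assms(5) by (simp add: F_def sum_sq_tensor)
  also have "Max ((\<lambda>m. \<Sum>m'<M. codeword_inner W n (c m) (c m') powr (1 / \<rho>)) ` {..<M})
      \<le> 1 + ((real M - 1) powr (\<rho> - 1) * ?L) powr (1 / \<rho>)"
    using assms(1-3) by (rule Max_row_sum_codeword_inner_powr_le)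
  finally show ?thesis by simp
qed

lemma rep_of_theta_less:
  fixes W :: "'x::finite \<Rightarrow> 'y::finite \<Rightarrow> real"
  assumes "theta W \<rho> TYPE('d::finite) < ereal v"
  obtains \<phi> :: "'x \<Rightarrow> complex^'d" and f
  where "\<phi> \<in> Gamma W \<rho>" "norm f = 1" "\<And>x. exp (- v) \<le> (cmod (cinner (\<phi> x) f))\<^sup>2"
proof -
  from assms obtain \<phi> :: "'x \<Rightarrow> complex^'d" where \<phi>: "\<phi> \<in> Gamma W \<rho>" "rep_value \<phi> < ereal v"
    unfolding theta_def by (auto simp: INF_less_iff)
  then obtain f where f: "norm f = 1" "(SUP x. logterm (\<phi> x) f) < ereal v"
    unfolding rep_value_def by (auto simp: INF_less_iff)
  have "exp (- v) \<le> (cmod (cinner (\<phi> x) f))\<^sup>2" for x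
  proof -
    have "logterm (\<phi> x) f < ereal v"
      using f(2) by (meson UNIV_I SUP_upper le_less_trans)
    then have "0 < (cmod (cinner (\<phi> x) f))\<^sup>2" and "- ln ((cmod (cinner (\<phi> x) f))\<^sup>2) < v"
      unfolding logterm_def by (auto simp: ln_div split: if_splits)
    then show ?thesis
      by (metis exp_less_cancel_iff exp_ln less_imp_le minus_less_iff)
  qed
  with \<phi> f that show ?thesis by blast
qed

lemma exp_neg_le_of_forall_less:
  assumes "0 \<le> q" "\<And>v. t < ereal v \<Longrightarrow> exp (- v) \<le> q"
  shows "exp_neg t \<le> q"
proof (cases t)
  case (real r)
  have "((\<lambda>v. exp (- v)) \<longlongrightarrow> exp (- r)) (at_right r)"
    by (intro tendsto_intros)
  moreover have "\<forall>\<^sub>F v in at_right r. exp (- v) \<le> q"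
    using eventually_at_right_less[of r] by eventually_elim (simp add: assms(2) real)
  ultimately have "exp (- r) \<le> q"
    by (rule tendsto_upperbound) simp
  then show ?thesis using real by (simp add: exp_neg_def)
next
  case PInf
  then show ?thesis using assms(1) by (simp add: exp_neg_def)
next
  case MInf
  then show ?thesis using assms(2)[of 0] by (simp add: exp_neg_def)
qed

lemma powr_div_le_of_le_powr_inverse:
  fixes a k L \<rho> :: real
  assumes "0 \<le> a" "a \<le> (k powr (\<rho> - 1) * L) powr (1 / \<rho>)" "0 < k" "1 \<le> \<rho>" "0 \<le> L"
  shows "a powr \<rho> / k powr (\<rho> - 1) \<le> L"
proof -
  have "a powr \<rho> \<le> ((k powr (\<rho> - 1) * L) powr (1 / \<rho>)) powr \<rho>"
    using assms by (intro powr_mono2) auto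
  also have "\<dots> = k powr (\<rho> - 1) * L"
    using assms by (simp add: powr_powr)
  finally show ?thesis
    using assms by (simp add: divide_le_eq mult.commute)
qed

lemma codeword_bound_of_theta:
  fixes W :: "'x::finite \<Rightarrow> 'y::finite \<Rightarrow> real" and c :: "nat \<Rightarrow> nat \<Rightarrow> 'x"
  assumes "dmc W" "M > 1" "\<rho> \<ge> 1"
  shows "real M * exp_neg (ereal (real n) * theta W \<rho> TYPE('d::finite)) - 1
       \<le> ((real M - 1) powr (\<rho> - 1)
          * Max ((\<lambda>m. \<Sum>m'\<in>{..<M} - {m}. codeword_inner W n (c m) (c m')) ` {..<M})) powr (1 / \<rho>)"
    (is "_ \<le> ?B")
proof -
  let ?L = "Max ((\<lambda>m. \<Sum>m'\<in>{..<M} - {m}. codeword_inner W n (c m) (c m')) ` {..<M})"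
  let ?\<theta> = "theta W \<rho> TYPE('d)"
  have M: "real M - 1 > 0" using assms(2) by simp
  show ?thesis
  proof (cases "n = 0")
    case True
    have "(\<Sum>m'\<in>{..<M} - {0}. codeword_inner W n (c 0) (c m')) \<le> ?L"
      using assms(2) by (intro Max_ge) auto
    then have "real M - 1 \<le> ?L"
      using True assms(2) by (simp add: codeword_inner_eq_prod_psi_inner card_Diff_singleton of_nat_diff)
    then have "((real M - 1) powr (\<rho> - 1) * (real M - 1)) powr (1 / \<rho>) \<le> ?B"
      using M assms(3) by (intro powr_mono2 mult_left_mono) auto
    moreover have "(real M - 1) powr (\<rho> - 1) * (real M - 1) = (real M - 1) powr \<rho>"
      using M by (simp add: powr_diff)
    then have "((real M - 1) powr (\<rho> - 1) * (real M - 1)) powr (1 / \<rho>) = real M - 1"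
      using M assms(3) by (simp add: powr_powr)
    ultimately show ?thesis
      using True by (simp add: exp_neg_def zero_ereal_def[symmetric])
  next
    case False
    have "exp_neg (ereal (real n) * ?\<theta>) \<le> (?B + 1) / real M"
    proof (rule exp_neg_le_of_forall_less)
      show "0 \<le> (?B + 1) / real M" by simp
      fix w assume "ereal (real n) * ?\<theta> < ereal w"
      then have "?\<theta> < ereal (w / real n)"
        using False by (cases ?\<theta>) (auto simp: field_simps)
      then obtain \<phi> :: "'x \<Rightarrow> complex^'d" and f where rep: "\<phi> \<in> Gamma W \<rho>" "norm f = 1"
          "\<And>x. exp (- (w / real n)) \<le> (cmod (cinner (\<phi> x) f))\<^sup>2"
        by (rule rep_of_theta_less) blast
      have "real M \<ge> 1" using assms(2) by simp
      from codeword_bound_of_rep[OF assms(1) _ assms(3) rep, of M n c] this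
      show "exp (- w) \<le> (?B + 1) / real M"
        using False M by (simp add: field_simps)
    qed
    then show ?thesis using M by (simp add: field_simps)
  qed
qed

theorem theorem1:
  fixes W :: "'x::finite \<Rightarrow> 'y::finite \<Rightarrow> real"
    and c :: "nat \<Rightarrow> nat \<Rightarrow> 'x"
    and n M :: nat and \<rho> :: real
  assumes "dmc W" and "M \<ge> 1" and "\<rho> \<ge> 1"
  shows "(Max ((\<lambda>m. \<Sum>m'\<in>{..<M} - {m}. codeword_inner W n (c m) (c m')) ` {..<M}))
    \<ge> (max 0 (real M * exp_neg (ereal (real n) * theta W \<rho> TYPE('d::finite)) - 1)) powr \<rho>
       / (real M - 1) powr (\<rho> - 1)"
proof -
  let ?L = "Max ((\<lambda>m. \<Sum>m'\<in>{..<M} - {m}. codeword_inner W n (c m) (c m')) ` {..<M})"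
  have "(\<Sum>m'\<in>{..<M} - {0}. codeword_inner W n (c 0) (c m')) \<le> ?L"
    using assms(2) by (intro Max_ge) auto
  then have L_nonneg: "0 \<le> ?L"
    by (meson order_trans sum_nonneg codeword_inner_nonneg[OF assms(1)])
  show ?thesis
  proof (cases "M = 1")
    case True
    then show ?thesis using L_nonneg by simp
  next
    case False
    with assms(2) have "M > 1" by simp
    then show ?thesis
      using codeword_bound_of_theta[OF assms(1) _ assms(3), of M n c, where 'd='d]
        powr_div_le_of_le_powr_inverse[of "max 0 _" "real M - 1" \<rho> ?L] assms(3) L_nonneg
      by simp
  qed
qed

end
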